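(* Let $K\subset\mathbb R^2$ be a triangle (resp. an axis-parallel rectangle) and let $k\ge 1$. For every $u\in P_k(K)$ (resp. $u\in Q_k(K)$) there exists $\varphi_u\in P_{k+1}(K)$ (resp. $\varphi_u\in Q_{k+1}(K)$) such that, for every edge $e$ of $K$ with unit tangent vector $\bm\tau_e$, the function $(\mathfrak p u-\nabla\varphi_u)\cdot\bm\tau_e$ is constant on $e$.
   Context: $P_i(K)$ denotes the polynomials of total degree at most $i$ on $K$; $Q_{i}(K)$ the polynomials of degree at most $i$ in each of $x_1$ and $x_2$. With $\bm x=(x_1,x_2)^T$ and $\bm x^\perp=(-x_2,x_1)^T$, the Poincaré operator (with origin at $0\in\mathbb R^2$) is $(\mathfrak p u)(\bm x)=\int_0^1 t\,\bm x^\perp\,u(t\bm x)\,dt$, which maps scalar functions to vector fields. *)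

theory Defs
  imports "HOL-Analysis.Analysis"
begin

definition perp :: "real \<times> real \<Rightarrow> real \<times> real" where
  "perp x = (- snd x, fst x)"

definition polyP :: "nat \<Rightarrow> (real \<times> real \<Rightarrow> real) set" where
  "polyP k = {f. \<exists>c :: nat \<Rightarrow> nat \<Rightarrow> real.
      \<forall>x1 x2. f (x1, x2) = (\<Sum>i\<le>k. \<Sum>j\<le>k - i. c i j * x1 ^ i * x2 ^ j)}"

definition polyQ :: "nat \<Rightarrow> (real \<times> real \<Rightarrow> real) set" where
  "polyQ k = {f. \<exists>c :: nat \<Rightarrow> nat \<Rightarrow> real.
      \<forall>x1 x2. f (x1, x2) = (\<Sum>i\<le>k. \<Sum>j\<le>k. c i j * x1 ^ i * x2 ^ j)}"

definition poincare :: "(real \<times> real \<Rightarrow> real) \<Rightarrow> real \<times> real \<Rightarrow> real \<times> real" where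
  "poincare u x = integral {0..1} (\<lambda>t. (t * u (t *\<^sub>R x)) *\<^sub>R perp x)"

definition grad :: "(real \<times> real \<Rightarrow> real) \<Rightarrow> real \<times> real \<Rightarrow> real \<times> real" where
  "grad f x = (frechet_derivative f (at x) (1, 0), frechet_derivative f (at x) (0, 1))"

definition tangential_const_on_edge ::
  "(real \<times> real \<Rightarrow> real \<times> real) \<Rightarrow> real \<times> real \<Rightarrow> real \<times> real \<Rightarrow> bool" where
  "tangential_const_on_edge F p q =
     (\<exists>C. \<forall>x\<in>closed_segment p q. F x \<bullet> ((1 / norm (q - p)) *\<^sub>R (q - p)) = C)"

end

theory Submission
  imports Defs "HOL-Computational_Algebra.Polynomial"
begin

text \<open>
  For a polynomial u, the Poincar\'e operator gives \<open>poincare u x = G x *\<^sub>R perp x\<close> with G a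
  polynomial of the same kind (the monomial \<open>x\<^sup>\<alpha>\<close> is divided by \<open>|\<alpha>| + 2\<close>). Along an edge
  \<open>p + s (q - p)\<close> the tangential component is therefore \<open>d g(s)\<close>, with \<open>d = perp p \<bullet> (q - p)\<close>
  and g a univariate polynomial of degree at most k. A correction \<open>\<phi>\<close> only has to have derivative
  \<open>d g(s)\<close> up to a constant along each edge. For each edge we take the primitive of g vanishing at
  both endpoints, written as \<open>L M N\<close> times a polynomial in M, where L, M are affine functions
  equal to \<open>1 - s\<close> and \<open>s\<close> on the edge and vanishing on the two adjacent edges, and N is 1 on the
  edge and vanishes on the opposite edge (N = 1 for triangles). These edge bubbles vanish on all
  other edges, so their sum works for all edges at once, and a degree count shows that it lies
  in \<open>P\<^sub>k\<^sub>+\<^sub>1\<close> resp. \<open>Q\<^sub>k\<^sub>+\<^sub>1\<close>.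
\<close>

section \<open>Spaces of polynomials in two variables\<close>

definition monom2 :: "nat \<times> nat \<Rightarrow> real \<times> real \<Rightarrow> real" where
  "monom2 s x = fst x ^ fst s * snd x ^ snd s"

definition poly_space :: "(nat \<times> nat) set \<Rightarrow> (real \<times> real \<Rightarrow> real) set" where
  "poly_space S = {f. \<exists>c. \<forall>x. f x = (\<Sum>s\<in>S. c s * monom2 s x)}"

definition exponents :: "nat \<Rightarrow> nat \<Rightarrow> nat \<Rightarrow> (nat \<times> nat) set" where
  "exponents n m r = {s. fst s \<le> n \<and> snd s \<le> m \<and> fst s + snd s \<le> r}"

abbreviation polyD :: "nat \<Rightarrow> nat \<Rightarrow> nat \<Rightarrow> (real \<times> real \<Rightarrow> real) set" where
  "polyD n m r \<equiv> poly_space (exponents n m r)"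

lemma finite_exponents [simp]: "finite (exponents n m r)"
proof -
  have "exponents n m r \<subseteq> {..n} \<times> {..m}" by (auto simp: exponents_def)
  thus ?thesis by (rule finite_subset) auto
qed

lemma poly_space_zero: "(\<lambda>x. 0) \<in> poly_space S"
  unfolding poly_space_def by (rule CollectI, rule exI[of _ "\<lambda>_. 0"]) simp

lemma poly_space_add:
  assumes "f \<in> poly_space S" "g \<in> poly_space S"
  shows "(\<lambda>x. f x + g x) \<in> poly_space S"
proof -
  obtain c d where "\<And>x. f x = (\<Sum>s\<in>S. c s * monom2 s x)" "\<And>x. g x = (\<Sum>s\<in>S. d s * monom2 s x)"
    using assms unfolding poly_space_def by blast
  hence "\<forall>x. f x + g x = (\<Sum>s\<in>S. (c s + d s) * monom2 s x)"
    by (simp add: sum.distrib distrib_right)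
  thus ?thesis unfolding poly_space_def mem_Collect_eq by (intro exI[of _ "\<lambda>s. c s + d s"])
qed

lemma poly_space_cmult:
  assumes "f \<in> poly_space S"
  shows "(\<lambda>x. a * f x) \<in> poly_space S"
proof -
  obtain c where "\<And>x. f x = (\<Sum>s\<in>S. c s * monom2 s x)" using assms unfolding poly_space_def by blast
  hence "\<forall>x. a * f x = (\<Sum>s\<in>S. (a * c s) * monom2 s x)" by (simp add: sum_distrib_left mult.assoc)
  thus ?thesis unfolding poly_space_def mem_Collect_eq by (intro exI[of _ "\<lambda>s. a * c s"])
qed

lemma poly_space_sum:
  "finite I \<Longrightarrow> (\<And>i. i \<in> I \<Longrightarrow> f i \<in> poly_space S) \<Longrightarrow> (\<lambda>x. \<Sum>i\<in>I. f i x) \<in> poly_space S"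
  by (induction I rule: finite_induct) (auto intro: poly_space_zero poly_space_add)

lemma monom2_in_poly_space:
  assumes "finite S" "s \<in> S"
  shows "monom2 s \<in> poly_space S"
proof -
  have "monom2 s x = (\<Sum>t\<in>S. (if t = s then 1 else 0) * monom2 t x)" for x
  proof -
    have "(\<Sum>t\<in>S. (if t = s then 1 else 0) * monom2 t x) = (\<Sum>t\<in>S. if t = s then monom2 t x else 0)"
      by (rule sum.cong) auto
    thus ?thesis using assms by simp
  qed
  thus ?thesis unfolding poly_space_def by (intro CollectI exI[of _ "\<lambda>t. if t = s then 1 else 0"] allI)
qed

lemma poly_space_mono:
  assumes "finite T" "S \<subseteq> T" "f \<in> poly_space S"
  shows "f \<in> poly_space T"
proof -
  obtain c where c: "\<And>x. f x = (\<Sum>s\<in>S. c s * monom2 s x)" using assms unfolding poly_space_def by auto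
  have "finite S" using assms finite_subset by blast
  hence "(\<lambda>x. \<Sum>s\<in>S. c s * monom2 s x) \<in> poly_space T"
    using assms by (intro poly_space_sum poly_space_cmult monom2_in_poly_space) auto
  moreover have "f = (\<lambda>x. \<Sum>s\<in>S. c s * monom2 s x)" using c by auto
  ultimately show ?thesis by simp
qed

lemma poly_space_mult:
  assumes "finite S" "finite T" "finite U"
    and "\<And>s t. s \<in> S \<Longrightarrow> t \<in> T \<Longrightarrow> (fst s + fst t, snd s + snd t) \<in> U"
    and f: "f \<in> poly_space S" and g: "g \<in> poly_space T"
  shows "(\<lambda>x. f x * g x) \<in> poly_space U"
proof -
  obtain c where c: "\<And>x. f x = (\<Sum>s\<in>S. c s * monom2 s x)" using f unfolding poly_space_def by auto
  obtain d where d: "\<And>x. g x = (\<Sum>t\<in>T. d t * monom2 t x)" using g unfolding poly_space_def by auto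
  have "f x * g x = (\<Sum>s\<in>S. c s * (\<Sum>t\<in>T. d t * monom2 (fst s + fst t, snd s + snd t) x))" for x
    unfolding c sum_distrib_right
    by (rule sum.cong) (simp_all add: d sum_distrib_left monom2_def power_add mult_ac)
  moreover have "(\<lambda>x. \<Sum>s\<in>S. c s * (\<Sum>t\<in>T. d t * monom2 (fst s + fst t, snd s + snd t) x))
      \<in> poly_space U"
    using assms by (intro poly_space_sum poly_space_cmult monom2_in_poly_space)
  ultimately show ?thesis by simp
qed

lemma polyD_mult:
  "f \<in> polyD n m r \<Longrightarrow> g \<in> polyD n' m' r' \<Longrightarrow> (\<lambda>x. f x * g x) \<in> polyD (n + n') (m + m') (r + r')"
  by (rule poly_space_mult[OF finite_exponents finite_exponents finite_exponents])
    (auto simp: exponents_def)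

lemma polyD_mono:
  "f \<in> polyD n m r \<Longrightarrow> n \<le> n' \<Longrightarrow> m \<le> m' \<Longrightarrow> r \<le> r' \<Longrightarrow> f \<in> polyD n' m' r'"
  by (rule poly_space_mono[OF finite_exponents, of "exponents n m r"]) (auto simp: exponents_def)

lemma polyD_const: "(\<lambda>x. a) \<in> polyD n m r"
proof -
  have "monom2 (0, 0) \<in> polyD n m r" by (rule monom2_in_poly_space[OF finite_exponents]) (simp add: exponents_def)
  from poly_space_cmult[OF this, of a] show ?thesis by (simp add: monom2_def)
qed

lemma polyD_power: "f \<in> polyD n m r \<Longrightarrow> (\<lambda>x. f x ^ i) \<in> polyD (i * n) (i * m) (i * r)"
proof (induction i)
  case 0
  show ?case using polyD_const[of 1] by simp
next
  case (Suc i)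
  from polyD_mult[OF Suc.prems Suc.IH[OF Suc.prems]] show ?case by simp
qed

lemma affine_in_polyD:
  "(\<lambda>x. \<alpha> * fst x + \<beta> * snd x + \<gamma>) \<in> polyD (if \<alpha> = 0 then 0 else 1) (if \<beta> = 0 then 0 else 1) 1"
proof -
  have "monom2 (1, 0) \<in> polyD 1 0 1" "monom2 (0, 1) \<in> polyD 0 1 1"
    by (rule monom2_in_poly_space[OF finite_exponents]; simp add: exponents_def)+
  moreover have "monom2 (1, 0) = fst" "monom2 (0, 1) = snd" by (simp_all add: monom2_def fun_eq_iff)
  ultimately have fst: "fst \<in> polyD 1 0 1" and snd: "snd \<in> polyD 0 1 1" by simp_all
  have "(\<lambda>x. \<alpha> * fst x) \<in> polyD (if \<alpha> = 0 then 0 else 1) (if \<beta> = 0 then 0 else 1) 1"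
    using poly_space_cmult[OF polyD_mono[OF fst, of 1 "if \<beta> = 0 then 0 else 1" 1], of \<alpha>]
    by (cases "\<alpha> = 0") (simp_all add: poly_space_zero)
  moreover have "(\<lambda>x. \<beta> * snd x) \<in> polyD (if \<alpha> = 0 then 0 else 1) (if \<beta> = 0 then 0 else 1) 1"
    using poly_space_cmult[OF polyD_mono[OF snd, of "if \<alpha> = 0 then 0 else 1" 1 1], of \<beta>]
    by (cases "\<beta> = 0") (simp_all add: poly_space_zero)
  ultimately show ?thesis by (intro poly_space_add polyD_const)
qed

lemma poly_space_Sigma_eq:
  assumes S: "S = Sigma {..k} B" and fin: "\<And>i. finite (B i)"
  shows "poly_space S =
    {f. \<exists>c :: nat \<Rightarrow> nat \<Rightarrow> real. \<forall>x1 x2. f (x1, x2) = (\<Sum>i\<le>k. \<Sum>j\<in>B i. c i j * x1 ^ i * x2 ^ j)}"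
proof -
  have sum_eq: "(\<Sum>s\<in>S. c s * monom2 s x) = (\<Sum>i\<le>k. \<Sum>j\<in>B i. c (i, j) * fst x ^ i * snd x ^ j)"
    for c and x :: "real \<times> real"
  proof -
    have "(\<Sum>i\<le>k. \<Sum>j\<in>B i. c (i, j) * monom2 (i, j) x) = (\<Sum>(i, j)\<in>S. c (i, j) * monom2 (i, j) x)"
      unfolding S by (rule sum.Sigma) (auto simp: fin)
    thus ?thesis by (simp add: case_prod_beta' monom2_def mult.assoc)
  qed
  show ?thesis
  proof (intro equalityI subsetI CollectI)
    fix f assume "f \<in> poly_space S"
    then obtain c where "\<And>x. f x = (\<Sum>s\<in>S. c s * monom2 s x)" unfolding poly_space_def by blast
    thus "\<exists>c. \<forall>x1 x2. f (x1, x2) = (\<Sum>i\<le>k. \<Sum>j\<in>B i. c i j * x1 ^ i * x2 ^ j)"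
      by (intro exI[of _ "\<lambda>i j. c (i, j)"]) (simp add: sum_eq)
  next
    fix f :: "real \<times> real \<Rightarrow> real"
    assume "f \<in> {f. \<exists>c. \<forall>x1 x2. f (x1, x2) = (\<Sum>i\<le>k. \<Sum>j\<in>B i. c i j * x1 ^ i * x2 ^ j)}"
    then obtain c where c: "\<And>x1 x2. f (x1, x2) = (\<Sum>i\<le>k. \<Sum>j\<in>B i. c i j * x1 ^ i * x2 ^ j)"
      by blast
    have "f x = (\<Sum>s\<in>S. c (fst s) (snd s) * monom2 s x)" for x
      using c[of "fst x" "snd x"] by (simp add: sum_eq)
    thus "f \<in> poly_space S"
      unfolding poly_space_def by (intro CollectI exI[of _ "\<lambda>s. c (fst s) (snd s)"] allI)
  qed
qed

lemma polyP_eq_polyD: "polyP k = polyD k k k"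
  unfolding polyP_def by (rule poly_space_Sigma_eq[symmetric]) (auto simp: exponents_def)

lemma polyQ_eq_polyD: "polyQ k = polyD k k (2 * k)"
  unfolding polyQ_def by (rule poly_space_Sigma_eq[symmetric]) (auto simp: exponents_def)

lemma poly_space_differentiable:
  assumes "f \<in> poly_space S" "finite S"
  shows "f differentiable (at x)"
proof -
  obtain c where "\<And>x. f x = (\<Sum>s\<in>S. c s * monom2 s x)" using assms unfolding poly_space_def by blast
  hence "f = (\<lambda>x. \<Sum>s\<in>S. c s * (fst x ^ fst s * snd x ^ snd s))" by (simp add: monom2_def fun_eq_iff)
  moreover have "(\<lambda>x::real \<times> real. fst x ^ i * snd x ^ j) differentiable (at x)" for i j
    by (intro differentiable_mult differentiable_power bounded_linear_imp_differentiable
        bounded_linear_fst bounded_linear_snd)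
  ultimately show ?thesis
    using assms by (simp add: differentiable_sum differentiable_mult differentiable_const)
qed

lemma poly_space_on_line:
  assumes f: "f \<in> poly_space S" and "finite S"
    and deg: "\<And>s. s \<in> S \<Longrightarrow> (if fst v = 0 then 0 else fst s) + (if snd v = 0 then 0 else snd s) \<le> N"
  shows "\<exists>a. \<forall>t. f (p + t *\<^sub>R v) = (\<Sum>j\<le>N. a j * t ^ j)"
proof -
  obtain c where c: "\<And>x. f x = (\<Sum>s\<in>S. c s * monom2 s x)" using f unfolding poly_space_def by blast
  define P where "P = (\<Sum>s\<in>S. smult (c s) ([:fst p, fst v:] ^ fst s * [:snd p, snd v:] ^ snd s))"
  have deg_pCons: "degree [:a, b:] \<le> (if b = 0 then 0 else 1)" for a b :: real by auto
  have "degree P \<le> N" unfolding P_def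
  proof (rule degree_sum_le[OF \<open>finite S\<close>])
    fix s assume "s \<in> S"
    have "degree (smult (c s) ([:fst p, fst v:] ^ fst s * [:snd p, snd v:] ^ snd s))
       \<le> degree [:fst p, fst v:] * fst s + degree [:snd p, snd v:] * snd s"
      by (rule order_trans[OF degree_smult_le order_trans[OF degree_mult_le]])
        (intro add_mono degree_power_le)
    also have "\<dots> \<le> (if fst v = 0 then 0 else 1) * fst s + (if snd v = 0 then 0 else 1) * snd s"
      by (intro add_mono mult_right_mono deg_pCons) auto
    also have "\<dots> \<le> N" using deg[OF \<open>s \<in> S\<close>] by (auto split: if_splits)
    finally show "degree (smult (c s) ([:fst p, fst v:] ^ fst s * [:snd p, snd v:] ^ snd s)) \<le> N" .
  qed
  hence "poly P t = (\<Sum>j\<le>N. coeff P j * t ^ j)" for t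
    unfolding poly_altdef by (intro sum.mono_neutral_left) (auto simp: coeff_eq_0)
  moreover have "f (p + t *\<^sub>R v) = poly P t" for t
    by (simp add: c P_def poly_sum monom2_def algebra_simps)
  ultimately show ?thesis by metis
qed

section \<open>The Poincar\'e operator on polynomials\<close>

lemma has_integral_power_01: "((\<lambda>t::real. t ^ n) has_integral (1 / real (Suc n))) {0..1}"
proof -
  have "((\<lambda>t. t ^ Suc n / real (Suc n)) has_vector_derivative t ^ n) (at t within {0..1})"
    for t :: real
    using DERIV_divide[OF DERIV_pow[of "Suc n"] DERIV_const, of "real (Suc n)" t]
    unfolding has_real_derivative_iff_has_vector_derivative[symmetric]
    by (simp add: has_field_derivative_at_within del: of_nat_Suc)
  from fundamental_theorem_of_calculus[OF _ this] show ?thesis by simp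
qed

lemma poincare_poly_space:
  assumes u: "u \<in> poly_space S" and "finite S"
  shows "\<exists>G\<in>poly_space S. \<forall>x. poincare u x = G x *\<^sub>R perp x"
proof -
  obtain c where c: "\<And>x. u x = (\<Sum>s\<in>S. c s * monom2 s x)" using u unfolding poly_space_def by blast
  define G where "G x = (\<Sum>s\<in>S. (c s / real (fst s + snd s + 2)) * monom2 s x)" for x
  have "G \<in> poly_space S" unfolding poly_space_def G_def
    by (intro CollectI exI[of _ "\<lambda>s. c s / real (fst s + snd s + 2)"] allI refl)
  moreover have "poincare u x = G x *\<^sub>R perp x" for x
  proof -
    have "(\<lambda>t. t * u (t *\<^sub>R x)) = (\<lambda>t. \<Sum>s\<in>S. (c s * monom2 s x) * t ^ (fst s + snd s + 1))"
      by (simp add: c monom2_def sum_distrib_left power_add power_mult_distrib mult_ac)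
    moreover have "((\<lambda>t. \<Sum>s\<in>S. (c s * monom2 s x) * t ^ (fst s + snd s + 1)) has_integral
        (\<Sum>s\<in>S. (c s * monom2 s x) * (1 / real (Suc (fst s + snd s + 1))))) {0..1}"
      by (intro has_integral_sum \<open>finite S\<close> has_integral_mult_right has_integral_power_01)
    moreover have "(\<Sum>s\<in>S. (c s * monom2 s x) * (1 / real (Suc (fst s + snd s + 1)))) = G x"
      unfolding G_def by (rule sum.cong) auto
    ultimately have "((\<lambda>t. (t * u (t *\<^sub>R x)) *\<^sub>R perp x) has_integral G x *\<^sub>R perp x) {0..1}"
      by (intro has_integral_scaleR_left) simp
    thus ?thesis unfolding poincare_def by (rule integral_unique)
  qed
  ultimately show ?thesis by blast
qed

lemma grad_inner:
  assumes "\<phi> differentiable (at x)"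
  shows "grad \<phi> x \<bullet> v = frechet_derivative \<phi> (at x) v"
proof -
  let ?D = "frechet_derivative \<phi> (at x)"
  have lin: "linear ?D" using assms frechet_derivative_works has_derivative_linear by blast
  have "v = fst v *\<^sub>R (1, 0) + snd v *\<^sub>R (0, 1)" by (cases v) simp
  hence "?D v = fst v * ?D (1, 0) + snd v * ?D (0, 1)"
    by (metis linear_add[OF lin] linear_scale[OF lin] real_scaleR_def)
  thus ?thesis by (simp add: grad_def inner_prod_def mult.commute)
qed

lemma has_real_derivative_along_line:
  assumes "\<phi> differentiable (at (p + s *\<^sub>R v))"
  shows "((\<lambda>t. \<phi> (p + t *\<^sub>R v)) has_real_derivative grad \<phi> (p + s *\<^sub>R v) \<bullet> v) (at s)"
proof -
  let ?D = "frechet_derivative \<phi> (at (p + s *\<^sub>R v))"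
  have D: "(\<phi> has_derivative ?D) (at (p + s *\<^sub>R v))" using assms frechet_derivative_works by blast
  have "((\<lambda>t. p + t *\<^sub>R v) has_derivative (\<lambda>t. t *\<^sub>R v)) (at s)"
    by (auto intro!: derivative_eq_intros)
  from diff_chain_at[OF this D] have "((\<lambda>t. \<phi> (p + t *\<^sub>R v)) has_derivative (\<lambda>t. t * ?D v)) (at s)"
    using linear_scale[OF has_derivative_linear[OF D]] by (simp add: o_def)
  moreover have "(\<lambda>t. t * ?D v) = (*) (?D v)" by (simp add: fun_eq_iff)
  ultimately show ?thesis by (simp add: has_field_derivative_def grad_inner[OF assms])
qed

text \<open>On the edge, \<open>perp x \<bullet> (q - p) = perp p \<bullet> (q - p)\<close>, so the Poincar\'e part of the
  tangential component is \<open>d G x\<close>; the correction cancels it up to the constant C.\<close>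

lemma tangential_const_on_edgeI:
  assumes diff: "\<And>x. \<phi> differentiable (at x)"
    and pc: "\<And>x. poincare u x = G x *\<^sub>R perp x"
    and der: "\<And>s. ((\<lambda>s. \<phi> (p + s *\<^sub>R (q - p))) has_real_derivative
                  (perp p \<bullet> (q - p)) * G (p + s *\<^sub>R (q - p)) + C) (at s)"
  shows "tangential_const_on_edge (\<lambda>x. poincare u x - grad \<phi> x) p q"
  unfolding tangential_const_on_edge_def
proof (intro exI ballI)
  fix x assume "x \<in> closed_segment p q"
  then obtain s where x: "x = p + s *\<^sub>R (q - p)"
    unfolding closed_segment_def by (auto simp: algebra_simps)
  have "grad \<phi> x \<bullet> (q - p) = perp p \<bullet> (q - p) * G x + C"
    using DERIV_unique[OF has_real_derivative_along_line[OF diff] der] x by simp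
  moreover have "perp x \<bullet> (q - p) = perp p \<bullet> (q - p)"
    by (simp add: x perp_def inner_prod_def algebra_simps)
  ultimately have "(poincare u x - grad \<phi> x) \<bullet> (q - p) = - C"
    by (simp add: pc inner_diff_left)
  thus "(poincare u x - grad \<phi> x) \<bullet> ((1 / norm (q - p)) *\<^sub>R (q - p)) = - C / norm (q - p)"
    by simp
qed

section \<open>Edge bubbles\<close>

definition line_coeffs :: "(real \<times> real \<Rightarrow> real) \<Rightarrow> nat \<Rightarrow> real \<times> real \<Rightarrow> real \<times> real \<Rightarrow> nat \<Rightarrow> real"
  where "line_coeffs G k p q = (SOME a. \<forall>t. G (p + t *\<^sub>R (q - p)) = (\<Sum>j\<le>k. a j * t ^ j))"

lemma line_coeffs:
  assumes "\<exists>a. \<forall>t. G (p + t *\<^sub>R (q - p)) = (\<Sum>j\<le>k. a j * t ^ j)"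
  shows "G (p + t *\<^sub>R (q - p)) = (\<Sum>j\<le>k. line_coeffs G k p q j * t ^ j)"
  using someI_ex[OF assms] unfolding line_coeffs_def by blast

text \<open>Where \<open>L = 1 - s\<close>, \<open>M = s\<close>, \<open>N = 1\<close>, the bubble equals \<open>d \<Sum> a\<^sub>j (s\<^sup>j\<^sup>+\<^sup>1 - s) / (j + 1)\<close>,
  since \<open>(1 - s) s \<Sum>\<^sub>i\<^sub><\<^sub>j s\<^sup>i = s - s\<^sup>j\<^sup>+\<^sup>1\<close>.\<close>

definition edge_bubble :: "(real \<times> real \<Rightarrow> real) \<Rightarrow> nat \<Rightarrow> real \<times> real \<Rightarrow> real \<times> real
    \<Rightarrow> (real \<times> real \<Rightarrow> real) \<Rightarrow> (real \<times> real \<Rightarrow> real) \<Rightarrow> (real \<times> real \<Rightarrow> real) \<Rightarrow> real \<times> real \<Rightarrow> real"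
  where "edge_bubble G k p q L M N x = - (perp p \<bullet> (q - p)) * L x * M x * N x *
    (\<Sum>j\<le>k. line_coeffs G k p q j / real (Suc j) * (\<Sum>i<j. M x ^ i))"

lemma edge_bubble_eq_0:
  "L x = 0 \<or> M x = 0 \<or> N x = 0 \<Longrightarrow> edge_bubble G k p q L M N x = 0"
  unfolding edge_bubble_def by auto

lemma edge_bubble_on_edge:
  assumes "L x = 1 - s" "M x = s" "N x = 1"
  shows "edge_bubble G k p q L M N x =
    perp p \<bullet> (q - p) * (\<Sum>j\<le>k. line_coeffs G k p q j / real (Suc j) * (s ^ Suc j - s))"
proof -
  have "- ((1 - s) * s * (\<Sum>i<j. s ^ i)) = s ^ Suc j - s" for j
  proof -
    have "(1 - s) * s * (\<Sum>i<j. s ^ i) = s * ((1 - s) * (\<Sum>i<j. s ^ i))" by (simp add: mult_ac)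
    also have "\<dots> = s * (1 - s ^ j)" by (simp add: one_diff_power_eq)
    also have "\<dots> = s - s ^ Suc j" by (simp add: algebra_simps)
    finally show ?thesis by simp
  qed
  hence term_eq: "- d * (1 - s) * s * 1 * (b * (\<Sum>i<j. s ^ i)) = d * (b * (s ^ Suc j - s))"
    for b d :: real and j
    by (metis mult.assoc mult.left_commute mult_minus_left mult_minus_right mult_1_right)
  have "edge_bubble G k p q L M N x = - (perp p \<bullet> (q - p)) * (1 - s) * s * 1 *
      (\<Sum>j\<le>k. line_coeffs G k p q j / real (Suc j) * (\<Sum>i<j. s ^ i))"
    by (simp only: edge_bubble_def assms)
  also have "\<dots> = (\<Sum>j\<le>k. perp p \<bullet> (q - p) * (line_coeffs G k p q j / real (Suc j) * (s ^ Suc j - s)))"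
    by (simp only: sum_distrib_left[of "- (perp p \<bullet> (q - p)) * (1 - s) * s * 1"] term_eq)
  finally show ?thesis by (simp only: sum_distrib_left)
qed

lemma has_real_derivative_primitive:
  "((\<lambda>s. \<Sum>j\<le>k. a j / real (Suc j) * (s ^ Suc j - s)) has_real_derivative
     (\<Sum>j\<le>k. a j * s ^ j) - (\<Sum>j\<le>k. a j / real (Suc j))) (at s)"
proof -
  have "((\<lambda>s. \<Sum>j\<le>k. a j / real (Suc j) * (s ^ Suc j - s)) has_real_derivative
      (\<Sum>j\<le>k. a j / real (Suc j) * (real (Suc j) * s ^ j - 1))) (at s)"
  proof -
    have "((\<lambda>s. s ^ Suc j) has_real_derivative real (Suc j) * s ^ j) (at s)" for j
      using DERIV_pow[of "Suc j" s] by simp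
    thus ?thesis by (intro DERIV_cmult DERIV_sum DERIV_diff DERIV_ident)
  qed
  moreover have "(\<Sum>j\<le>k. a j / real (Suc j) * (real (Suc j) * s ^ j - 1))
      = (\<Sum>j\<le>k. a j * s ^ j - a j / real (Suc j))"
    by (rule sum.cong) (auto simp: field_simps)
  ultimately show ?thesis by (simp add: sum_subtractf)
qed

lemma tangential_const_on_edge_bubble:
  assumes diff: "\<And>x. \<phi> differentiable (at x)"
    and pc: "\<And>x. poincare u x = G x *\<^sub>R perp x"
    and G: "\<exists>a. \<forall>t. G (p + t *\<^sub>R (q - p)) = (\<Sum>j\<le>k. a j * t ^ j)"
    and LMN: "\<And>s. L (p + s *\<^sub>R (q - p)) = 1 - s" "\<And>s. M (p + s *\<^sub>R (q - p)) = s"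
      "\<And>s. N (p + s *\<^sub>R (q - p)) = 1"
    and \<phi>: "\<And>s. \<phi> (p + s *\<^sub>R (q - p)) = edge_bubble G k p q L M N (p + s *\<^sub>R (q - p))"
  shows "tangential_const_on_edge (\<lambda>x. poincare u x - grad \<phi> x) p q"
proof (rule tangential_const_on_edgeI[OF diff pc])
  let ?d = "perp p \<bullet> (q - p)" and ?a = "line_coeffs G k p q"
  fix s
  have "(\<lambda>s. \<phi> (p + s *\<^sub>R (q - p))) = (\<lambda>s. ?d * (\<Sum>j\<le>k. ?a j / real (Suc j) * (s ^ Suc j - s)))"
    by (simp add: \<phi> edge_bubble_on_edge LMN)
  hence "((\<lambda>s. \<phi> (p + s *\<^sub>R (q - p))) has_real_derivative
      ?d * ((\<Sum>j\<le>k. ?a j * s ^ j) - (\<Sum>j\<le>k. ?a j / real (Suc j)))) (at s)"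
    by (simp only:) (rule DERIV_cmult[OF has_real_derivative_primitive])
  thus "((\<lambda>s. \<phi> (p + s *\<^sub>R (q - p))) has_real_derivative
      ?d * G (p + s *\<^sub>R (q - p)) + - ?d * (\<Sum>j\<le>k. ?a j / real (Suc j))) (at s)"
    by (simp add: line_coeffs[OF G] right_diff_distrib)
qed

lemma edge_bubble_in_polyD:
  assumes L: "L \<in> polyD n m r" and M: "M \<in> polyD n m r" and N: "N \<in> polyD n' m' r'"
  shows "edge_bubble G k p q L M N \<in> polyD (Suc k * n + n') (Suc k * m + m') (Suc k * r + r')"
proof -
  have "edge_bubble G k p q L M N = (\<lambda>x. \<Sum>j\<le>k. \<Sum>i<j.
      (- (perp p \<bullet> (q - p)) * (line_coeffs G k p q j / real (Suc j))) * (L x * M x * N x * M x ^ i))"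
    unfolding edge_bubble_def sum_distrib_left by (intro ext sum.cong refl) (simp add: mult_ac)
  also have "\<dots> \<in> polyD (Suc k * n + n') (Suc k * m + m') (Suc k * r + r')"
  proof (intro poly_space_sum finite_atMost finite_lessThan poly_space_cmult)
    fix j i assume "j \<in> {..k}" "i \<in> {..<j}"
    hence le: "t + t + t' + i * t \<le> Suc k * t + t'" for t t' :: nat
      using mult_le_mono1[of "i + 2" "Suc k" t] by simp
    have "(\<lambda>x. L x * M x * N x * M x ^ i) \<in> polyD (n + n + n' + i * n) (m + m + m' + i * m) (r + r + r' + i * r)"
      by (intro polyD_mult polyD_power L M N)
    thus "(\<lambda>x. L x * M x * N x * M x ^ i) \<in> polyD (Suc k * n + n') (Suc k * m + m') (Suc k * r + r')"
      by (rule polyD_mono) (rule le)+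
  qed
  finally show ?thesis .
qed

section \<open>Barycentric coordinates\<close>

definition det2 :: "real \<times> real \<Rightarrow> real \<times> real \<Rightarrow> real" where
  "det2 v w = fst v * snd w - snd v * fst w"

lemma det2_swap: "det2 v w = - det2 w v"
  by (simp add: det2_def)

definition bary :: "real \<times> real \<Rightarrow> real \<times> real \<Rightarrow> real \<times> real \<Rightarrow> real \<times> real \<Rightarrow> real" where
  "bary p q r x = det2 (x - r) (q - r) / det2 (p - r) (q - r)"

lemma bary_in_polyD:
  "bary p q r \<in> polyD (if snd q = snd r then 0 else 1) (if fst q = fst r then 0 else 1) 1"
proof -
  define D where "D = det2 (p - r) (q - r)"
  have eq: "bary p q r = (\<lambda>x. (snd (q - r) / D) * fst x + (- fst (q - r) / D) * snd x
      + (snd r * fst (q - r) - fst r * snd (q - r)) / D)"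
    by (rule ext) (simp add: bary_def D_def det2_def divide_inverse algebra_simps)
  show ?thesis unfolding eq by (rule polyD_mono[OF affine_in_polyD]) auto
qed

lemma bary_in_polyD_1_1_1: "bary p q r \<in> polyD 1 1 1"
  by (rule polyD_mono[OF bary_in_polyD]) auto

lemma bary_in_polyD_1_0_1: "fst q = fst r \<Longrightarrow> bary p q r \<in> polyD 1 0 1"
  using bary_in_polyD[of p q r] by (auto elim: polyD_mono)

lemma bary_in_polyD_0_1_1: "snd q = snd r \<Longrightarrow> bary p q r \<in> polyD 0 1 1"
  using bary_in_polyD[of p q r] by (auto elim: polyD_mono)

lemma bary_start:
  "det2 (p - r) (q - r) \<noteq> 0 \<Longrightarrow> bary p q r (p + s *\<^sub>R (q - p)) = 1 - s"
  unfolding bary_def by (simp add: det2_def field_simps; simp add: algebra_simps)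

lemma bary_end:
  "det2 (q - r) (p - r) \<noteq> 0 \<Longrightarrow> bary q p r (p + s *\<^sub>R (q - p)) = s"
  unfolding bary_def by (simp add: det2_def field_simps; simp add: algebra_simps)

lemma bary_parallel:
  assumes "det2 (p - r) (q - r) \<noteq> 0" "det2 v (q - r) = 0"
  shows "bary p q r (p + s *\<^sub>R v) = 1"
proof -
  have "det2 (p + s *\<^sub>R v - r) (q - r) = det2 (p - r) (q - r) + s * det2 v (q - r)"
    by (simp add: det2_def algebra_simps)
  with assms show ?thesis by (simp add: bary_def)
qed

lemma bary_parallelogram:
  assumes "det2 (q - p) (w - p) \<noteq> 0" "p + r = q + w"
  shows "bary p q r (p + s *\<^sub>R (q - p)) = 1 - s" "bary q p w (p + s *\<^sub>R (q - p)) = s"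
    "bary p r w (p + s *\<^sub>R (q - p)) = 1"
proof -
  have r: "r = q + w - p" using assms(2) by (simp add: algebra_simps)
  have "det2 (p - r) (q - r) = det2 (q - p) (w - p)" "det2 (q - w) (p - w) = - det2 (q - p) (w - p)"
    "det2 (p - w) (r - w) = det2 (q - p) (w - p)" "det2 (q - p) (r - w) = 0"
    by (simp_all add: r det2_def algebra_simps)
  with assms(1) show "bary p q r (p + s *\<^sub>R (q - p)) = 1 - s" "bary q p w (p + s *\<^sub>R (q - p)) = s"
    "bary p r w (p + s *\<^sub>R (q - p)) = 1"
    by (simp_all add: bary_start bary_end bary_parallel)
qed

lemma bary_vanishes:
  "bary p q r (q + s *\<^sub>R (r - q)) = 0" "bary p q r (r + s *\<^sub>R (q - r)) = 0"
  unfolding bary_def by (simp_all add: det2_def algebra_simps)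

lemma det2_ne_0_if_not_collinear:
  assumes "\<not> collinear {x, y, z}"
  shows "det2 (x - y) (z - y) \<noteq> 0"
proof
  assume det: "det2 (x - y) (z - y) = 0"
  define w w' where "w = x - y" and "w' = z - y"
  from det have det': "fst w * snd w' = snd w * fst w'" by (simp add: det2_def w_def w'_def)
  have "w = 0 \<or> w' = 0 \<or> (\<exists>c. w' = c *\<^sub>R w)"
  proof (cases "fst w = 0")
    case True
    with det' have "snd w = 0 \<or> fst w' = 0" by simp
    with True have "w = 0 \<or> w' = (snd w' / snd w) *\<^sub>R w" by (auto simp: prod_eq_iff)
    thus ?thesis by blast
  next
    case False
    with det' have "w' = (fst w' / fst w) *\<^sub>R w" by (simp add: prod_eq_iff field_simps)
    thus ?thesis by blast
  qed
  hence "collinear {0, x - y, z - y}" unfolding collinear_lemma w_def w'_def .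
  moreover have "collinear {x, y, z} \<longleftrightarrow> collinear {0, x - y, z - y}"
    by (auto simp: collinear_def)
  ultimately show False using assms by simp
qed

section \<open>Triangles and rectangles\<close>

lemma triangle_tangential_correction:
  assumes nc: "\<not> collinear {a, b, c}" and u: "u \<in> polyP k"
  shows "\<exists>\<phi>\<in>polyP (Suc k). \<forall>(p, q)\<in>{(a, b), (b, c), (c, a)}.
           tangential_const_on_edge (\<lambda>x. poincare u x - grad \<phi> x) p q"
proof -
  obtain G where G: "G \<in> polyD k k k" and pc: "\<And>x. poincare u x = G x *\<^sub>R perp x"
    using poincare_poly_space[OF _ finite_exponents] u unfolding polyP_eq_polyD by blast
  have G_line: "\<exists>a. \<forall>t. G (p + t *\<^sub>R (q - p)) = (\<Sum>j\<le>k. a j * t ^ j)" for p q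
    by (rule poly_space_on_line[OF G finite_exponents]) (auto simp: exponents_def)
  define B where "B p q r = edge_bubble G k p q (bary p q r) (bary q p r) (\<lambda>_. 1)" for p q r
  define \<phi> where "\<phi> x = B a b c x + B b c a x + B c a b x" for x
  have "B p q r \<in> polyD (Suc k) (Suc k) (Suc k)" for p q r
    unfolding B_def
    using edge_bubble_in_polyD[OF bary_in_polyD_1_1_1 bary_in_polyD_1_1_1 polyD_const[of 1 0 0 0]] by simp
  hence \<phi>_mem: "\<phi> \<in> polyD (Suc k) (Suc k) (Suc k)"
    unfolding \<phi>_def[abs_def] by (intro poly_space_add)
  hence diff: "\<And>x. \<phi> differentiable (at x)" by (simp add: poly_space_differentiable)
  have edge: "tangential_const_on_edge (\<lambda>x. poincare u x - grad \<phi> x) p q"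
    if "det2 (p - r) (q - r) \<noteq> 0"
      and "\<And>s. \<phi> (p + s *\<^sub>R (q - p)) = B p q r (p + s *\<^sub>R (q - p))" for p q r
    by (rule tangential_const_on_edge_bubble[OF diff pc G_line])
      (use that in \<open>simp_all add: B_def bary_start bary_end det2_swap[of "q - r"]\<close>)
  have "tangential_const_on_edge (\<lambda>x. poincare u x - grad \<phi> x) p q"
    if "(p, q, r) \<in> {(a, b, c), (b, c, a), (c, a, b)}" for p q r
  proof (rule edge[where r = r])
    show "det2 (p - r) (q - r) \<noteq> 0"
      using that by (auto intro!: det2_ne_0_if_not_collinear simp: nc insert_commute)
    show "\<phi> (p + s *\<^sub>R (q - p)) = B p q r (p + s *\<^sub>R (q - p))" for s
      using that by (auto simp: \<phi>_def B_def edge_bubble_eq_0 bary_vanishes)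
  qed
  with \<phi>_mem show ?thesis unfolding polyP_eq_polyD by blast
qed

lemma rectangle_tangential_correction:
  assumes "x0 < x1" "y0 < y1" and u: "u \<in> polyQ k"
  shows "\<exists>\<phi>\<in>polyQ (Suc k). \<forall>(p, q)\<in>{((x0, y0), (x1, y0)), ((x1, y0), (x1, y1)),
                                  ((x1, y1), (x0, y1)), ((x0, y1), (x0, y0))}.
           tangential_const_on_edge (\<lambda>x. poincare u x - grad \<phi> x) p q"
proof -
  obtain G where G: "G \<in> polyD k k (2 * k)" and pc: "\<And>x. poincare u x = G x *\<^sub>R perp x"
    using poincare_poly_space[OF _ finite_exponents] u unfolding polyQ_eq_polyD by blast
  define A B C D where "A = (x0, y0)" and "B = (x1, y0)" and "C = (x1, y1)" and "D = (x0, y1)"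
  text \<open>The bubble of the edge from p to q; r follows q and w precedes p in the cycle.\<close>
  define E where "E p q r w = edge_bubble G k p q (bary p q r) (bary q p w) (bary p r w)" for p q r w
  define \<phi> where "\<phi> x = E A B C D x + E B C D A x + E C D A B x + E D A B C x" for x
  have horizontal: "E p q r w \<in> polyD (Suc k) (Suc k) (2 * Suc k)"
    if "fst q = fst r" "fst p = fst w" "snd r = snd w" for p q r w
    using edge_bubble_in_polyD[OF bary_in_polyD_1_0_1 bary_in_polyD_1_0_1 bary_in_polyD_0_1_1, OF that]
    unfolding E_def by (rule polyD_mono) simp_all
  have vertical: "E p q r w \<in> polyD (Suc k) (Suc k) (2 * Suc k)"
    if "snd q = snd r" "snd p = snd w" "fst r = fst w" for p q r w
    using edge_bubble_in_polyD[OF bary_in_polyD_0_1_1 bary_in_polyD_0_1_1 bary_in_polyD_1_0_1, OF that]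
    unfolding E_def by (rule polyD_mono) simp_all
  have \<phi>_mem: "\<phi> \<in> polyD (Suc k) (Suc k) (2 * Suc k)"
    unfolding \<phi>_def[abs_def] by (intro poly_space_add horizontal vertical) (simp_all add: A_def B_def C_def D_def)
  hence diff: "\<And>x. \<phi> differentiable (at x)" by (simp add: poly_space_differentiable)
  have edge: "tangential_const_on_edge (\<lambda>x. poincare u x - grad \<phi> x) p q"
    if "fst p = fst q \<or> snd p = snd q" and "det2 (q - p) (w - p) \<noteq> 0" and "p + r = q + w"
      and "\<And>s. \<phi> (p + s *\<^sub>R (q - p)) = E p q r w (p + s *\<^sub>R (q - p))" for p q r w
  proof (rule tangential_const_on_edge_bubble[OF diff pc])
    show "\<exists>a. \<forall>t. G (p + t *\<^sub>R (q - p)) = (\<Sum>j\<le>k. a j * t ^ j)"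
      by (rule poly_space_on_line[OF G finite_exponents]) (use that(1) in \<open>auto simp: exponents_def\<close>)
    show "bary p q r (p + s *\<^sub>R (q - p)) = 1 - s" "bary q p w (p + s *\<^sub>R (q - p)) = s"
      "bary p r w (p + s *\<^sub>R (q - p)) = 1" for s
      using bary_parallelogram[OF that(2,3)] by simp_all
  qed (use that in \<open>simp add: E_def\<close>)
  have "tangential_const_on_edge (\<lambda>x. poincare u x - grad \<phi> x) p q"
    if "(p, q, r, w) \<in> {(A, B, C, D), (B, C, D, A), (C, D, A, B), (D, A, B, C)}" for p q r w
  proof (rule edge[where r = r and w = w])
    show "fst p = fst q \<or> snd p = snd q" "det2 (q - p) (w - p) \<noteq> 0" "p + r = q + w"
      using that assms(1,2) by (auto simp: A_def B_def C_def D_def det2_def)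
    show "\<phi> (p + s *\<^sub>R (q - p)) = E p q r w (p + s *\<^sub>R (q - p))" for s
      using that by (auto simp: \<phi>_def E_def edge_bubble_eq_0 bary_vanishes)
  qed
  with \<phi>_mem show ?thesis unfolding polyQ_eq_polyD A_def B_def C_def D_def by blast
qed

theorem mainTheorem1:
  fixes k :: nat
  assumes "k \<ge> 1"
  shows "(\<forall>a b c u. \<not> collinear {a, b, c} \<and> u \<in> polyP k \<longrightarrow>
            (\<exists>\<phi>\<in>polyP (Suc k).
               \<forall>(p, q)\<in>{(a, b), (b, c), (c, a)}.
                  tangential_const_on_edge (\<lambda>x. poincare u x - grad \<phi> x) p q))
       \<and> (\<forall>x0 x1 y0 y1 u. x0 < x1 \<and> y0 < y1 \<and> u \<in> polyQ k \<longrightarrow>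
            (\<exists>\<phi>\<in>polyQ (Suc k).
               \<forall>(p, q)\<in>{((x0, y0), (x1, y0)), ((x1, y0), (x1, y1)),
                         ((x1, y1), (x0, y1)), ((x0, y1), (x0, y0))}.
                  tangential_const_on_edge (\<lambda>x. poincare u x - grad \<phi> x) p q))"
  using triangle_tangential_correction rectangle_tangential_correction by blast

end
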